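(* Let $d\ge 3$, let $\mathcal M$ be a model of $\mathrm{PQM}_d$ with domain $\mathbb M$, and let $\kappa:\mathbb M\to\mathbb H_d$ be the function such that for all $m\in\mathbb M$, $p\in\mathbb H_d$: $[m:p]^{\mathcal M}\iff\kappa(m)\le p$. Then $\kappa$ is a strong $\mathcal L_d$-morphism from $\mathcal M$ to $\mathcal H_d$; that is, for all $m\in\mathbb M$: (1) for all $p\in\mathbb H_d$, $[m:p]^{\mathcal M}\iff[\kappa(m):p]^{\mathcal H_d}$; (2) for all $q\in\mathbb H_d$, $\kappa(\pi_q^{\mathcal M}(m))=\kappa(m)\,\&\,q$; (3) for all $U\in\mathbb U_d$, $\kappa(u_U^{\mathcal M}(m))=U(\kappa(m))$.
   Context: Notation. For $d\ge 1$, $\mathbb H_d$ is the set of complex linear subspaces of $\mathbb C^d$, ordered by inclusion $\le$, with $\top=\mathbb C^d$, $\bot=\{0\}$, $p^\bot$ the orthogonal complement, $p\wedge q=p\cap q$ and $p\vee q=p+q$. $\mathbb U_d$ is the set of unitary operators on $\mathbb C^d$, and for $U\in\mathbb U_d$, $p\in\mathbb H_d$, $U(p)=\{Uv: v\in p\}$. The Sasaki projection is $p\,\&\,q := q\cap(q^\bot+p)$. Subspaces $p,q$ are compatible iff $p=(p\wedge q)\vee(p\wedge q^\bot)$. Language $\mathcal L_d$: a first-order language without equality and without constants, having a unary function symbol $u_U$ for each $U\in\mathbb U_d$, a unary function symbol $\pi_q$ for each $q\in\mathbb H_d$, and a unary relation symbol $[\,\cdot:p]$ for each $p\in\mathbb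 H_d$. Theory $\mathrm{PQM}_d$ (over $\mathcal L_d$) has the following axioms, for all $p,q\in\mathbb H_d$ and $U\in\mathbb U_d$: ($\neg\bot$) $\exists x\,\neg[x:\bot]$; ($\top$) $\forall x\,[x:\top]$; ($\le$) if $p\le q$: $\forall x\,([x:p]\to[x:q])$; ($\wedge$) if $p,q$ are compatible: $\forall x\,([x:p]\wedge[x:q]\to[x:p\wedge q])$; ($\pi_i$) $\forall x\,([x:p]\to[\pi_q(x):p\,\&\,q])$; ($\pi_c$) if $p\le q$: $\forall x\,([\pi_p(\pi_q(x)):\bot]\to[\pi_p(x):\bot])$; ($\pi_\bot$) $\forall x\,([\pi_q(x):\bot]\to[x:q^\bot])$; ($u_i$) $\forall x\,([x:p]\to[u_U(x):U(p)])$; ($u_e$) $\forall x\,([u_U(x):p]\to[x:U^{-1}(p)])$. Hilbert model $\mathcal H_d$: the $\mathcal L_d$-structure with domain $\mathbb H_d$, $u_U^{\mathcal H_d}(x)=U(x)$, $\pi_q^{\mathcal H_d}(x)=x\,\&\,q$, and $[x:p]^{\mathcal H_d}$ holds iff $x\le p$. *)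

theory Defs
  imports "HOL-Analysis.Analysis"
begin

text \<open>The Hilbert space C^d is modelled as complex ^ 'n with CARD('n) = d.
  Complex linear subspaces are the subspaces w.r.t. complex scalar multiplication (*s).\<close>

type_synonym 'n cvec = "complex ^ 'n"
type_synonym 'n cmat = "complex ^ 'n ^ 'n"

definition csubspace :: "'n::finite cvec set \<Rightarrow> bool" where
  "csubspace S \<longleftrightarrow> vec.subspace S"

definition cinner :: "'n::finite cvec \<Rightarrow> 'n cvec \<Rightarrow> complex" where
  "cinner x y = (\<Sum>i\<in>UNIV. cnj (x $ i) * y $ i)"

definition orth :: "'n::finite cvec set \<Rightarrow> 'n cvec set" where
  "orth S = {y. \<forall>x\<in>S. cinner x y = 0}"

definition ssum :: "'n::finite cvec set \<Rightarrow> 'n cvec set \<Rightarrow> 'n cvec set" where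
  "ssum A B = {x + y | x y. x \<in> A \<and> y \<in> B}"

text \<open>Sasaki projection p & q = q meet (q-perp join p).\<close>
definition sasaki :: "'n::finite cvec set \<Rightarrow> 'n cvec set \<Rightarrow> 'n cvec set" where
  "sasaki p q = q \<inter> ssum (orth q) p"

definition compatible :: "'n::finite cvec set \<Rightarrow> 'n cvec set \<Rightarrow> bool" where
  "compatible p q \<longleftrightarrow> p = ssum (p \<inter> q) (p \<inter> orth q)"

definition cadj :: "'n::finite cmat \<Rightarrow> 'n cmat" where
  "cadj U = (\<chi> i j. cnj (U $ j $ i))"

definition unitary :: "'n::finite cmat \<Rightarrow> bool" where
  "unitary U \<longleftrightarrow> cadj U ** U = mat 1 \<and> U ** cadj U = mat 1"

definition uimg :: "'n::finite cmat \<Rightarrow> 'n cvec set \<Rightarrow> 'n cvec set" where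
  "uimg U p = (\<lambda>v. U *v v) ` p"

text \<open>An L_d-structure with domain 'm: interpretations uM of u_U, piM of pi_q, and relM of [x:p]
  (only their values at unitary U / subspaces q, p matter).\<close>
definition PQM_model ::
  "('n::finite cmat \<Rightarrow> 'm \<Rightarrow> 'm) \<Rightarrow> ('n cvec set \<Rightarrow> 'm \<Rightarrow> 'm) \<Rightarrow> ('m \<Rightarrow> 'n cvec set \<Rightarrow> bool) \<Rightarrow> bool"
where
  "PQM_model uM piM relM \<longleftrightarrow>
     (\<exists>x. \<not> relM x {0}) \<and>
     (\<forall>x. relM x UNIV) \<and>
     (\<forall>p q x. csubspace p \<and> csubspace q \<and> p \<subseteq> q \<and> relM x p \<longrightarrow> relM x q) \<and>
     (\<forall>p q x. csubspace p \<and> csubspace q \<and> compatible p q \<and> relM x p \<and> relM x q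
        \<longrightarrow> relM x (p \<inter> q)) \<and>
     (\<forall>p q x. csubspace p \<and> csubspace q \<and> relM x p \<longrightarrow> relM (piM q x) (sasaki p q)) \<and>
     (\<forall>p q x. csubspace p \<and> csubspace q \<and> p \<subseteq> q \<and> relM (piM p (piM q x)) {0}
        \<longrightarrow> relM (piM p x) {0}) \<and>
     (\<forall>q x. csubspace q \<and> relM (piM q x) {0} \<longrightarrow> relM x (orth q)) \<and>
     (\<forall>U p x. unitary U \<and> csubspace p \<and> relM x p \<longrightarrow> relM (uM U x) (uimg U p)) \<and>
     (\<forall>U p x. unitary U \<and> csubspace p \<and> relM (uM U x) p \<longrightarrow> relM x (uimg (matrix_inv U) p))"

end

theory Submission imports Defs begin

text \<open>Write \<open>a = \<kappa> m\<close> and \<open>b = \<kappa> (\<pi>\<^sub>q m)\<close>. The unitary clause is immediate: \<open>u\<^sub>i\<close> gives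
  \<open>\<kappa> (u\<^sub>U m) \<le> U(a)\<close> and \<open>u\<^sub>e\<close> gives \<open>a \<le> U\<^sup>-\<^sup>1(\<kappa> (u\<^sub>U m))\<close>. For the Sasaki clause \<open>\<pi>\<^sub>i\<close>
  gives \<open>b \<le> a & q\<close>, in particular \<open>b \<le> q\<close>. Put \<open>p = q \<sqinter> b\<^sup>\<bottom>\<close>; then \<open>b & p = \<bottom>\<close>, so
  \<open>\<pi>\<^sub>p (\<pi>\<^sub>q m)\<close> lies in \<open>\<bottom>\<close>, hence so does \<open>\<pi>\<^sub>p m\<close> by \<open>\<pi>\<^sub>c\<close>, and \<open>\<pi>\<^sub>\<bottom>\<close> yields \<open>a \<le> p\<^sup>\<bottom>\<close>.
  Now split \<open>v \<in> a & q\<close> as \<open>v = v\<^sub>b + v'\<close> with \<open>v\<^sub>b \<in> b\<close>, \<open>v' \<in> b\<^sup>\<bottom>\<close>. Since \<open>b \<le> q\<close>, \<open>v' \<in> p\<close>;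
  and \<open>v \<in> q\<^sup>\<bottom> + a\<close> is orthogonal to \<open>p\<close>, so \<open>v'\<close> is orthogonal to both \<open>v\<close> and \<open>v\<^sub>b\<close>, i.e. \<open>v' = 0\<close>.\<close>

lemma csubspace_0: "csubspace S \<Longrightarrow> 0 \<in> S"
  unfolding csubspace_def by (rule vec.subspace_0)

lemma csubspace_add: "csubspace S \<Longrightarrow> x \<in> S \<Longrightarrow> y \<in> S \<Longrightarrow> x + y \<in> S"
  unfolding csubspace_def by (rule vec.subspace_add)

lemma csubspace_scale: "csubspace S \<Longrightarrow> x \<in> S \<Longrightarrow> c *s x \<in> S"
  unfolding csubspace_def by (rule vec.subspace_scale)

lemma csubspace_diff: "csubspace S \<Longrightarrow> x \<in> S \<Longrightarrow> y \<in> S \<Longrightarrow> x - y \<in> S"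
  unfolding csubspace_def by (rule vec.subspace_diff)

lemma csubspaceI:
  "0 \<in> S \<Longrightarrow> (\<And>x y. x \<in> S \<Longrightarrow> y \<in> S \<Longrightarrow> x + y \<in> S)
    \<Longrightarrow> (\<And>c x. x \<in> S \<Longrightarrow> c *s x \<in> S) \<Longrightarrow> csubspace S"
  unfolding csubspace_def vec.subspace_def by blast

lemma csubspace_imp_subspace:
  fixes S :: "'n::finite cvec set"
  assumes "csubspace S"
  shows "subspace S"
proof -
  have "r *\<^sub>R x = complex_of_real r *s x" for r and x :: "'n cvec"
    by (simp add: vec_eq_iff scaleR_conv_of_real[where 'a=complex])
  then show ?thesis
    unfolding subspace_def using assms csubspace_0 csubspace_add csubspace_scale by metis
qed

lemma csubspace_zero: "csubspace {0 :: 'n::finite cvec}"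
  by (rule csubspaceI) auto

lemma csubspace_Int: "csubspace A \<Longrightarrow> csubspace B \<Longrightarrow> csubspace (A \<inter> B)"
  by (rule csubspaceI) (auto intro: csubspace_0 csubspace_add csubspace_scale)

lemma csubspace_ssum:
  assumes A: "csubspace A" and B: "csubspace B"
  shows "csubspace (ssum A B)"
proof (rule csubspaceI)
  show "0 \<in> ssum A B"
    unfolding ssum_def using A B csubspace_0 by force
  show "x + y \<in> ssum A B" if "x \<in> ssum A B" "y \<in> ssum A B" for x y
  proof -
    from that obtain x1 x2 y1 y2
      where "x = x1 + x2" "y = y1 + y2" "x1 \<in> A" "y1 \<in> A" "x2 \<in> B" "y2 \<in> B"
      unfolding ssum_def by blast
    moreover have "x1 + x2 + (y1 + y2) = (x1 + y1) + (x2 + y2)"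
      by (simp add: algebra_simps)
    ultimately show ?thesis
      unfolding ssum_def using A B csubspace_add by fastforce
  qed
  show "c *s x \<in> ssum A B" if "x \<in> ssum A B" for c x
  proof -
    from that obtain x1 x2 where "x = x1 + x2" "x1 \<in> A" "x2 \<in> B"
      unfolding ssum_def by blast
    moreover have "c *s (x1 + x2) = c *s x1 + c *s x2"
      by (rule vec.scale_right_distrib)
    ultimately show ?thesis
      unfolding ssum_def using A B csubspace_scale by fastforce
  qed
qed

lemma csubspace_uimg:
  assumes p: "csubspace p"
  shows "csubspace (uimg U p)"
proof -
  have "(\<lambda>v. U *v v) ` p = (*v) U ` p" by simp
  moreover have "vec.subspace ((*v) U ` p)"
    using p unfolding csubspace_def
    by (rule vec.linear_subspace_image[OF matrix_vector_mul_linear_gen])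
  ultimately show ?thesis
    unfolding uimg_def csubspace_def by simp
qed

lemma inner_eq_Re_cinner: "inner x y = Re (cinner x y)"
  unfolding inner_vec_def cinner_def by (simp add: inner_complex_def)

lemma cinner_add_right: "cinner x (y + z) = cinner x y + cinner x z"
  unfolding cinner_def by (simp add: algebra_simps sum.distrib)

lemma cinner_scale_right: "cinner x (c *s y) = c * cinner x y"
  unfolding cinner_def by (simp add: algebra_simps sum_distrib_left)

lemma cinner_zero_right: "cinner x 0 = 0"
  unfolding cinner_def by simp

lemma cinner_commute: "cinner y x = cnj (cinner x y)"
  unfolding cinner_def by (simp add: mult.commute)

lemma cinner_self_eq_zero: "cinner x x = 0 \<Longrightarrow> x = 0"
  using inner_eq_zero_iff[of x] by (simp add: inner_eq_Re_cinner)

lemma csubspace_orth: "csubspace (orth S)"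
  by (rule csubspaceI) (auto simp: orth_def cinner_add_right cinner_scale_right cinner_zero_right)

lemma csubspace_sasaki: "csubspace p \<Longrightarrow> csubspace q \<Longrightarrow> csubspace (sasaki p q)"
  unfolding sasaki_def by (intro csubspace_Int csubspace_ssum csubspace_orth)

lemma subset_orth_sym: "A \<subseteq> orth B \<longleftrightarrow> B \<subseteq> orth A"
proof -
  have "cinner x y = 0 \<longleftrightarrow> cinner y x = 0" for x y
    by (simp add: cinner_commute[of x])
  then show ?thesis
    unfolding orth_def by blast
qed

lemma Int_orth_self: "S \<inter> orth S \<subseteq> {0}"
  unfolding orth_def using cinner_self_eq_zero by blast

text \<open>The real decomposition of the library applies to the underlying real inner product
  \<open>Re (cinner x y)\<close>; testing it against \<open>w\<close> and \<open>\<i> *s w\<close> recovers the imaginary part.\<close>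
lemma csubspace_orth_decomp:
  fixes b :: "'n::finite cvec set"
  assumes b: "csubspace b"
  obtains y z where "y \<in> b" "z \<in> orth b" "v = y + z"
proof -
  have span_b: "span b = b"
    using csubspace_imp_subspace[OF b] by (simp add: span_eq_iff)
  obtain y z where y: "y \<in> b" and z: "\<And>w. w \<in> b \<Longrightarrow> orthogonal z w" and v: "v = y + z"
    using orthogonal_subspace_decomp_exists[of b v] unfolding span_b by blast
  have "cinner w z = 0" if w: "w \<in> b" for w
  proof -
    have "Re (cinner z w) = 0" and "Re (cinner z (\<i> *s w)) = 0"
      using z[OF w] z[OF csubspace_scale[OF b w]] by (simp_all add: orthogonal_def inner_eq_Re_cinner)
    then show ?thesis
      by (simp add: cinner_commute[of w] cinner_scale_right complex_eq_iff)
  qed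
  then show ?thesis
    using that y v unfolding orth_def by blast
qed

lemma sasaki_subset_zero_if_subset_orth:
  assumes "b \<subseteq> orth p"
  shows "sasaki b p \<subseteq> {0}"
proof
  fix x assume "x \<in> sasaki b p"
  then obtain w u where x: "x \<in> p" "x = w + u" "w \<in> orth p" "u \<in> b"
    unfolding sasaki_def ssum_def by blast
  then have "x \<in> orth p"
    using assms csubspace_add csubspace_orth by blast
  then show "x \<in> {0}"
    using x(1) Int_orth_self by blast
qed

lemma sasaki_subset_if_orth:
  assumes q: "csubspace q" and b: "csubspace b" and "b \<subseteq> q"
    and a_orth: "a \<subseteq> orth (q \<inter> orth b)"
  shows "sasaki a q \<subseteq> b"
proof
  fix v assume "v \<in> sasaki a q"
  then obtain w u where v: "v \<in> q" "v = w + u" "w \<in> orth q" "u \<in> a"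
    unfolding sasaki_def ssum_def by blast
  obtain vb v' where vb: "vb \<in> b" and v': "v' \<in> orth b" and v_eq: "v = vb + v'"
    using csubspace_orth_decomp[OF b] by blast
  have "v' = v - vb" using v_eq by simp
  then have "v' \<in> q"
    using csubspace_diff[OF q v(1)] vb \<open>b \<subseteq> q\<close> by auto
  have "cinner v' u = 0"
    using a_orth v(4) v' \<open>v' \<in> q\<close> subset_orth_sym unfolding orth_def by blast
  moreover have "cinner v' w = 0"
    using \<open>v' \<in> q\<close> v(3) unfolding orth_def by blast
  moreover have "cinner v' vb = 0"
    using vb v' subset_orth_sym[of "{v'}" b] unfolding orth_def by blast
  ultimately have "cinner v' (vb + v') = 0"
    by (simp add: v_eq[symmetric] v(2) cinner_add_right)
  then have "v' = 0"
    using \<open>cinner v' vb = 0\<close> by (simp add: cinner_add_right cinner_self_eq_zero)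
  then show "v \<in> b"
    using v_eq vb by simp
qed

lemma unitary_mult_matrix_inv:
  assumes "unitary U"
  shows "U *v (matrix_inv U *v x) = x"
proof -
  from assms have "\<exists>A'. U ** A' = mat 1 \<and> A' ** U = mat 1"
    unfolding unitary_def by blast
  then have "U ** matrix_inv U = mat 1"
    unfolding matrix_inv_def by (rule someI_ex[THEN conjunct1])
  then show ?thesis
    by (simp add: matrix_vector_mul_assoc)
qed

lemma uimg_subset_if_subset_uimg_inv:
  assumes U: "unitary U" and "p \<subseteq> uimg (matrix_inv U) r"
  shows "uimg U p \<subseteq> r"
proof -
  have "uimg U p \<subseteq> uimg U (uimg (matrix_inv U) r)"
    using assms(2) unfolding uimg_def by blast
  also have "\<dots> = r"
    unfolding uimg_def image_image unitary_mult_matrix_inv[OF U] by simp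
  finally show ?thesis .
qed

locale PQM_kappa =
  fixes uM :: "'n::finite cmat \<Rightarrow> 'm \<Rightarrow> 'm"
    and piM :: "'n cvec set \<Rightarrow> 'm \<Rightarrow> 'm"
    and relM :: "'m \<Rightarrow> 'n cvec set \<Rightarrow> bool"
    and \<kappa> :: "'m \<Rightarrow> 'n cvec set"
  assumes model: "PQM_model uM piM relM"
    and csubspace_kappa: "csubspace (\<kappa> m)"
    and rel_iff: "csubspace p \<Longrightarrow> relM m p \<longleftrightarrow> \<kappa> m \<subseteq> p"
begin

lemma rel_pi: "csubspace p \<Longrightarrow> csubspace q \<Longrightarrow> relM x p \<Longrightarrow> relM (piM q x) (sasaki p q)"
  and rel_pi_compose_zero: "csubspace p \<Longrightarrow> csubspace q \<Longrightarrow> p \<subseteq> q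
      \<Longrightarrow> relM (piM p (piM q x)) {0} \<Longrightarrow> relM (piM p x) {0}"
  and rel_pi_zero: "csubspace q \<Longrightarrow> relM (piM q x) {0} \<Longrightarrow> relM x (orth q)"
  and rel_u: "unitary U \<Longrightarrow> csubspace p \<Longrightarrow> relM x p \<Longrightarrow> relM (uM U x) (uimg U p)"
  and rel_u_inv: "unitary U \<Longrightarrow> csubspace p \<Longrightarrow> relM (uM U x) p
      \<Longrightarrow> relM x (uimg (matrix_inv U) p)"
  using model unfolding PQM_model_def by blast+

lemma rel_kappa: "relM m (\<kappa> m)"
  using rel_iff[OF csubspace_kappa] by blast

lemma kappa_u:
  assumes U: "unitary U"
  shows "\<kappa> (uM U m) = uimg U (\<kappa> m)"
proof
  have "relM (uM U m) (uimg U (\<kappa> m))"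
    by (rule rel_u[OF U csubspace_kappa rel_kappa])
  then show "\<kappa> (uM U m) \<subseteq> uimg U (\<kappa> m)"
    by (simp add: rel_iff csubspace_uimg csubspace_kappa)
  have "relM m (uimg (matrix_inv U) (\<kappa> (uM U m)))"
    by (rule rel_u_inv[OF U csubspace_kappa rel_kappa])
  then have "\<kappa> m \<subseteq> uimg (matrix_inv U) (\<kappa> (uM U m))"
    by (simp add: rel_iff csubspace_uimg csubspace_kappa)
  then show "uimg U (\<kappa> m) \<subseteq> \<kappa> (uM U m)"
    by (rule uimg_subset_if_subset_uimg_inv[OF U])
qed

lemma kappa_pi_subset_sasaki:
  assumes q: "csubspace q"
  shows "\<kappa> (piM q m) \<subseteq> sasaki (\<kappa> m) q"
proof -
  have "relM (piM q m) (sasaki (\<kappa> m) q)"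
    by (rule rel_pi[OF csubspace_kappa q rel_kappa])
  then show ?thesis
    by (simp add: rel_iff csubspace_sasaki[OF csubspace_kappa q])
qed

lemma kappa_subset_orth_pi:
  assumes q: "csubspace q"
  shows "\<kappa> m \<subseteq> orth (q \<inter> orth (\<kappa> (piM q m)))"
proof -
  define p where "p = q \<inter> orth (\<kappa> (piM q m))"
  have p: "csubspace p"
    unfolding p_def using q csubspace_orth csubspace_Int by blast
  have "\<kappa> (piM q m) \<subseteq> orth p"
    unfolding p_def using subset_orth_sym by blast
  then have sasaki_zero: "sasaki (\<kappa> (piM q m)) p \<subseteq> {0}"
    by (rule sasaki_subset_zero_if_subset_orth)
  have "relM (piM p (piM q m)) (sasaki (\<kappa> (piM q m)) p)"
    by (rule rel_pi[OF csubspace_kappa p rel_kappa])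
  then have "\<kappa> (piM p (piM q m)) \<subseteq> sasaki (\<kappa> (piM q m)) p"
    by (simp add: rel_iff csubspace_sasaki[OF csubspace_kappa p])
  then have "relM (piM p (piM q m)) {0}"
    using sasaki_zero by (simp add: rel_iff csubspace_zero)
  moreover have "p \<subseteq> q"
    unfolding p_def by blast
  ultimately have "relM (piM p m) {0}"
    using rel_pi_compose_zero[OF p q] by blast
  then have "relM m (orth p)"
    by (rule rel_pi_zero[OF p])
  then show ?thesis
    by (simp add: rel_iff csubspace_orth p_def)
qed

lemma kappa_pi:
  assumes q: "csubspace q"
  shows "\<kappa> (piM q m) = sasaki (\<kappa> m) q"
proof
  show sub: "\<kappa> (piM q m) \<subseteq> sasaki (\<kappa> m) q"
    by (rule kappa_pi_subset_sasaki[OF q])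
  show "sasaki (\<kappa> m) q \<subseteq> \<kappa> (piM q m)"
  proof (rule sasaki_subset_if_orth[OF q csubspace_kappa])
    show "\<kappa> (piM q m) \<subseteq> q"
      using sub unfolding sasaki_def by blast
    show "\<kappa> m \<subseteq> orth (q \<inter> orth (\<kappa> (piM q m)))"
      by (rule kappa_subset_orth_pi[OF q])
  qed
qed

end

theorem mainTheorem11:
  fixes uM :: "'n::finite cmat \<Rightarrow> 'm \<Rightarrow> 'm"
    and piM :: "'n cvec set \<Rightarrow> 'm \<Rightarrow> 'm"
    and relM :: "'m \<Rightarrow> 'n cvec set \<Rightarrow> bool"
    and \<kappa> :: "'m \<Rightarrow> 'n cvec set"
  assumes "CARD('n) \<ge> 3"
    and "PQM_model uM piM relM"
    and "\<forall>m. csubspace (\<kappa> m)"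
    and "\<forall>m p. csubspace p \<longrightarrow> (relM m p \<longleftrightarrow> \<kappa> m \<subseteq> p)"
  shows "\<forall>m. (\<forall>p. csubspace p \<longrightarrow> (relM m p \<longleftrightarrow> \<kappa> m \<subseteq> p))
            \<and> (\<forall>q. csubspace q \<longrightarrow> \<kappa> (piM q m) = sasaki (\<kappa> m) q)
            \<and> (\<forall>U. unitary U \<longrightarrow> \<kappa> (uM U m) = uimg U (\<kappa> m))"
proof -
  \<comment> \<open>\<open>d \<ge> 3\<close> is what makes \<open>\<kappa>\<close> exist (Gleason's theorem).\<close>
  interpret PQM_kappa uM piM relM \<kappa>
    by unfold_locales (simp_all add: assms(2-4))
  show ?thesis
    using assms(4) by (simp add: kappa_pi kappa_u)
qed

end
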